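(* Let $D$ be a Newton diagram in $2$ variables whose support is exactly $K=\{(a,b)\in\mathbb N_0^2: a+b<d\}$ for some integer $d\ge1$. Then $\#(D)\ge\frac{d+5}{2}$.
   Context: For $m\in\mathbb Z^n$ write $|m|=m_1+\dots+m_n$; $e_1,\dots,e_n$ is the standard basis. A Newton diagram in $n$ variables is a function $D\colon\mathbb Z^n\to\{0,P,N\}$ ($P,N$ formal symbols) whose support $K=D^{-1}(\{P,N\})$ is a finite nonempty subset of $\mathbb N_0^n$. For $a\in\mathbb Z^n$ let $E(a)=\{a,a-e_1,\dots,a-e_n\}$; $E(a)$ is a node of $D$ if the image $D(E(a))$ equals $\{P\}$, $\{N\}$, $\{0,P\}$ or $\{0,N\}$. $\#(D)$ is the number of $a\in\mathbb Z^n$ for which $E(a)$ is a node. *)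

theory Defs
  imports Main
begin

text \<open>Values of a Newton diagram: 0 and the formal symbols P, N.\<close>
datatype sgn = Z | P | N

text \<open>Points of Z^n are integer lists of length n. e i is the i-th standard basis vector.\<close>
definition unitvec :: "nat \<Rightarrow> nat \<Rightarrow> int list" where
  "unitvec n i = map (\<lambda>j. if j = i then 1 else 0) [0..<n]"

definition vsub :: "int list \<Rightarrow> int list \<Rightarrow> int list" where
  "vsub a b = map2 (-) a b"

definition supp :: "(int list \<Rightarrow> sgn) \<Rightarrow> int list set" where
  "supp D = {m. D m \<in> {P, N}}"

text \<open>D is a Newton diagram in n variables (D is only evaluated on lists of length n;
  its values elsewhere are irrelevant, so we require them to be Z).\<close>
definition newton_diagram :: "nat \<Rightarrow> (int list \<Rightarrow> sgn) \<Rightarrow> bool" where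
  "newton_diagram n D \<longleftrightarrow>
     (\<forall>m. D m \<noteq> Z \<longrightarrow> length m = n \<and> (\<forall>x\<in>set m. x \<ge> 0))
     \<and> finite (supp D) \<and> supp D \<noteq> {}"

definition Eset :: "nat \<Rightarrow> int list \<Rightarrow> int list set" where
  "Eset n a = insert a {vsub a (unitvec n i) | i. i < n}"

definition is_node :: "nat \<Rightarrow> (int list \<Rightarrow> sgn) \<Rightarrow> int list \<Rightarrow> bool" where
  "is_node n D a \<longleftrightarrow> D ` Eset n a \<in> {{P}, {N}, {Z, P}, {Z, N}}"

definition num_nodes :: "nat \<Rightarrow> (int list \<Rightarrow> sgn) \<Rightarrow> nat" where
  "num_nodes n D = card {a. length a = n \<and> is_node n D a}"

end

theory Submission
  imports Defs
begin

text \<open>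
  We only count nodes
  \<open>(j, k - j)\<close> on the diagonals \<open>k = 0, \<dots>, d\<close>.  Along diagonal \<open>k < d\<close> all values
  are nonzero, so it carries a sign sequence with some number \<open>A k\<close> of sign changes.
  A node at \<open>(j, k - j)\<close> compares the sign there with the signs at \<open>(j - 1, k - j)\<close>
  and \<open>(j, k - j - 1)\<close>, which lie on diagonal \<open>k - 1\<close>.  A purely combinatorial
  statement about two adjacent sign sequences gives, for \<open>1 \<le> k < d\<close>,
  \<open>2 \<cdot> (nodes on diagonal k) + A (k - 1) \<ge> A k\<close>; telescoping yields
  \<open>2 \<cdot> (nodes on diagonals 1..d-1) \<ge> A (d - 1)\<close>.  The origin is a node, and on
  diagonal \<open>d\<close> (just outside the support) the two end points are nodes and an
  interior point is a node exactly where diagonal \<open>d - 1\<close> does not change sign,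
  giving \<open>d + 1 - A (d - 1)\<close> nodes there.  Since \<open>A (d - 1) \<le> d - 1\<close>, twice the
  number of nodes is at least \<open>2 + A (d - 1) + 2 (d + 1 - A (d - 1)) \<ge> d + 5\<close>.
\<close>


section \<open>Nodes of a diagram in two variables\<close>

lemma node_pattern_iff:
  "{u, v, w} \<in> {{P}, {N}, {Z, P}, {Z, N}} \<longleftrightarrow>
   (u \<noteq> Z \<or> v \<noteq> Z \<or> w \<noteq> Z) \<and> (u \<noteq> Z \<longrightarrow> v \<noteq> Z \<longrightarrow> u = v)
   \<and> (u \<noteq> Z \<longrightarrow> w \<noteq> Z \<longrightarrow> u = w) \<and> (v \<noteq> Z \<longrightarrow> w \<noteq> Z \<longrightarrow> v = w)"
  by (cases u; cases v; cases w) (auto simp: insert_commute doubleton_eq_iff)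

lemma nonzero_eq_iff: "u \<noteq> Z \<Longrightarrow> v \<noteq> Z \<Longrightarrow> u = v \<longleftrightarrow> (u = P \<longleftrightarrow> v = P)"
  by (cases u; cases v) auto

lemma Eset_2: "Eset 2 [x, y] = {[x, y], [x - 1, y], [x, y - 1]}"
proof -
  have "{vsub [x, y] (unitvec 2 i) | i. i < 2} = {[x - 1, y], [x, y - 1]}"
    by (auto simp: vsub_def unitvec_def less_Suc_eq numeral_2_eq_2)
  then show ?thesis by (simp add: Eset_def)
qed

lemma is_node_2_iff:
  "is_node 2 D [x, y] \<longleftrightarrow>
   (D [x, y] \<noteq> Z \<or> D [x - 1, y] \<noteq> Z \<or> D [x, y - 1] \<noteq> Z)
   \<and> (D [x, y] \<noteq> Z \<longrightarrow> D [x - 1, y] \<noteq> Z \<longrightarrow> D [x, y] = D [x - 1, y])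
   \<and> (D [x, y] \<noteq> Z \<longrightarrow> D [x, y - 1] \<noteq> Z \<longrightarrow> D [x, y] = D [x, y - 1])
   \<and> (D [x - 1, y] \<noteq> Z \<longrightarrow> D [x, y - 1] \<noteq> Z \<longrightarrow> D [x - 1, y] = D [x, y - 1])"
  by (simp only: is_node_def Eset_2 image_insert image_empty node_pattern_iff)

lemma in_supp_iff: "a \<in> supp D \<longleftrightarrow> D a \<noteq> Z"
  by (cases "D a") (auto simp: supp_def)

text \<open>A node \<open>a\<close> has \<open>a\<close>, \<open>a - e\<^sub>1\<close> or \<open>a - e\<^sub>2\<close> in the support, so a diagram with
  finite support has finitely many nodes; this makes \<open>num_nodes\<close> a true count.\<close>
lemma finite_nodes_2:
  assumes "finite (supp D)"
  shows "finite {a. length a = 2 \<and> is_node 2 D a}"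
proof -
  define shift1 where "shift1 a = [a ! 0 + 1, a ! 1]" for a :: "int list"
  define shift2 where "shift2 a = [a ! 0, a ! 1 + 1]" for a :: "int list"
  have "{a. length a = 2 \<and> is_node 2 D a} \<subseteq> supp D \<union> shift1 ` supp D \<union> shift2 ` supp D"
  proof
    fix a assume "a \<in> {a. length a = 2 \<and> is_node 2 D a}"
    then obtain x y where a: "a = [x, y]" and node: "is_node 2 D [x, y]"
      by (auto simp: numeral_2_eq_2 length_Suc_conv)
    have "[x, y] \<in> supp D \<or> [x - 1, y] \<in> supp D \<or> [x, y - 1] \<in> supp D"
      using node by (simp add: is_node_2_iff in_supp_iff)
    moreover have "shift1 [x - 1, y] = [x, y]" "shift2 [x, y - 1] = [x, y]"
      by (simp_all add: shift1_def shift2_def)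
    ultimately show "a \<in> supp D \<union> shift1 ` supp D \<union> shift2 ` supp D"
      unfolding a by (auto intro: rev_image_eqI)
  qed
  then show ?thesis using assms by (meson finite_UnI finite_imageI finite_subset)
qed


section \<open>Sign changes of two adjacent sequences\<close>

definition changes :: "(nat \<Rightarrow> bool) \<Rightarrow> nat \<Rightarrow> int" where
  "changes s n = (\<Sum>i<n. of_bool (s i \<noteq> s (Suc i)))"

lemma changes_Suc: "changes s (Suc n) = changes s n + of_bool (s n \<noteq> s (Suc n))"
  by (simp add: changes_def)

lemma non_changes: "(\<Sum>i<n. of_bool (s i = s (Suc i))) = int n - changes s n"
proof -
  have "(\<Sum>i<n. of_bool (s i = s (Suc i))) + changes s n = (\<Sum>i<n. (1::int))"
    unfolding changes_def sum.distrib[symmetric] by (rule sum.cong) auto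
  then show ?thesis by simp
qed

lemma changes_le: "changes s n \<le> int n"
proof -
  have "(\<Sum>i<n. of_bool (s i = s (Suc i))) \<ge> (0::int)" by (rule sum_nonneg) simp
  then show ?thesis by (simp add: non_changes)
qed

text \<open>Given signs \<open>b 0, \<dots>, b k\<close> on one diagonal and \<open>c 0, \<dots>, c (k - 1)\<close> on the
  diagonal below, position \<open>j\<close> of the upper diagonal is a "node" if \<open>b j\<close> agrees with
  its lower neighbours \<open>c (j - 1)\<close> and \<open>c j\<close> (whichever exist).  \<open>nodes_before b c m\<close>
  counts these nodes at positions \<open>j < m\<close>.\<close>
definition nodes_before :: "(nat \<Rightarrow> bool) \<Rightarrow> (nat \<Rightarrow> bool) \<Rightarrow> nat \<Rightarrow> int" where
  "nodes_before b c m =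
     of_bool (b 0 = c 0) + (\<Sum>j\<in>{1..<m}. of_bool (b j = c (j - 1) \<and> c j = c (j - 1)))"

text \<open>The inductive invariant behind \<open>sign_changes_bound\<close>: the count up to \<open>m\<close>,
  completed by the right end point condition at \<open>m\<close>.\<close>
lemma nodes_before_bound:
  assumes "m \<ge> 1"
  shows "changes b m \<le> 2 * nodes_before b c m + changes c (m - 1) + of_bool (b m = c (m - 1))"
  using assms
proof (induction m rule: nat_induct_at_least)
  case base
  then show ?case
    by (cases "b 0"; cases "b 1"; cases "c 0") (auto simp: changes_def nodes_before_def)
next
  case (Suc m)
  have nodes: "nodes_before b c (Suc m) =
      nodes_before b c m + of_bool (b m = c (m - 1) \<and> c m = c (m - 1))"
    using Suc.hyps by (simp add: nodes_before_def)
  have lower: "changes c (Suc m - 1) = changes c (m - 1) + of_bool (c (m - 1) \<noteq> c m)"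
    using Suc.hyps changes_Suc[of c "m - 1"] by simp
  show ?case
    using Suc.IH unfolding nodes lower changes_Suc
    by (cases "b m"; cases "b (Suc m)"; cases "c m"; cases "c (m - 1)") auto
qed

text \<open>Every sign change of the upper sequence is paid for by a node (counted twice)
  or by a sign change of the lower sequence.\<close>
lemma sign_changes_bound:
  assumes "k \<ge> 1"
  shows "changes b k \<le> 2 * (nodes_before b c k + of_bool (b k = c (k - 1))) + changes c (k - 1)"
  using nodes_before_bound[OF assms, of b c] by (cases "b k = c (k - 1)") simp_all


section \<open>Diagrams supported on a triangle\<close>

lemma sum_atMost_split_ends:
  fixes g :: "nat \<Rightarrow> 'a::comm_monoid_add"
  assumes "k \<ge> 1"
  shows "(\<Sum>j\<le>k. g j) = g 0 + (\<Sum>j\<in>{1..<k}. g j) + g k"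
proof -
  have "{..k} = insert 0 (insert k {1..<k})" using assms by auto
  then show ?thesis using assms by (simp add: algebra_simps)
qed

locale triangle_diagram =
  fixes D :: "int list \<Rightarrow> sgn" and d :: nat
  assumes d_pos: "d \<ge> 1"
    and supp_D: "supp D = {[a, b] | a b. a \<ge> 0 \<and> b \<ge> 0 \<and> a + b < int d}"
begin

lemma nonzero_iff: "D [x, y] \<noteq> Z \<longleftrightarrow> x \<ge> 0 \<and> y \<ge> 0 \<and> x + y < int d"
proof -
  have "D [x, y] \<noteq> Z \<longleftrightarrow> [x, y] \<in> supp D" by (simp add: in_supp_iff)
  then show ?thesis using supp_D by auto
qed

definition diag_sign :: "nat \<Rightarrow> nat \<Rightarrow> bool" where
  "diag_sign k i \<longleftrightarrow> D [int i, int k - int i] = P"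

definition diag_changes :: "nat \<Rightarrow> int" where
  "diag_changes k = changes (diag_sign k) k"

definition diag_nodes :: "nat \<Rightarrow> int" where
  "diag_nodes k = (\<Sum>j\<le>k. of_bool (is_node 2 D [int j, int k - int j]))"

text \<open>Distinct diagonals carry distinct nodes, so they give a lower bound for the count.\<close>
lemma diag_nodes_le_num_nodes:
  assumes "finite (supp D)"
  shows "(\<Sum>k\<le>d. diag_nodes k) \<le> int (num_nodes 2 D)"
proof -
  define T where "T = Sigma {..d} (\<lambda>k. {j\<in>{..k}. is_node 2 D [int j, int k - int j]})"
  define pt where "pt = (\<lambda>(k::nat, j::nat). [int j, int k - int j])"
  have "inj_on pt T" unfolding pt_def inj_on_def T_def by auto
  moreover have "pt ` T \<subseteq> {a. length a = 2 \<and> is_node 2 D a}"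
    unfolding pt_def T_def by auto
  ultimately have "card T \<le> num_nodes 2 D"
    unfolding num_nodes_def by (metis card_image card_mono finite_nodes_2[OF assms])
  moreover have "int (card T) = (\<Sum>k\<le>d. diag_nodes k)"
    unfolding T_def diag_nodes_def by (simp add: of_nat_sum Int_def sum.If_cases)
  ultimately show ?thesis by linarith
qed

lemma diag_nodes_0: "diag_nodes 0 = 1"
  using d_pos by (simp add: diag_nodes_def is_node_2_iff nonzero_iff)

lemma diag_nodes_inner:
  assumes "1 \<le> k" "k < d"
  defines "b \<equiv> diag_sign k" and "c \<equiv> diag_sign (k - 1)"
  shows "diag_nodes k = nodes_before b c k + of_bool (b k = c (k - 1))"
proof -
  have c: "c i \<longleftrightarrow> D [int i, int k - 1 - int i] = P" for i
    using assms(1) by (simp add: c_def diag_sign_def of_nat_diff)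
  have b: "b i \<longleftrightarrow> D [int i, int k - int i] = P" for i
    by (simp add: b_def diag_sign_def)
  have node_0: "is_node 2 D [0, int k - 0] \<longleftrightarrow> b 0 = c 0"
    using assms(1,2) nonzero_eq_iff[of "D [0, int k]" "D [0, int k - 1]"]
    by (simp add: is_node_2_iff nonzero_iff b c)
  have node_k: "is_node 2 D [int k, int k - int k] \<longleftrightarrow> b k = c (k - 1)"
    using assms(1,2) nonzero_eq_iff[of "D [int k, 0]" "D [int k - 1, 0]"]
    by (simp add: is_node_2_iff nonzero_iff b c of_nat_diff)
  have node_j: "is_node 2 D [int j, int k - int j] \<longleftrightarrow> b j = c (j - 1) \<and> c j = c (j - 1)"
    if "j \<in> {1..<k}" for j
  proof -
    let ?u = "D [int j, int k - int j]" and ?v = "D [int j - 1, int k - int j]"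
      and ?w = "D [int j, int k - int j - 1]"
    have nz: "?u \<noteq> Z" "?v \<noteq> Z" "?w \<noteq> Z" using that assms(2) by (auto simp: nonzero_iff)
    have "b j \<longleftrightarrow> ?u = P" "c (j - 1) \<longleftrightarrow> ?v = P" "c j \<longleftrightarrow> ?w = P"
      using that by (simp_all add: b c of_nat_diff algebra_simps)
    then show ?thesis
      using nz nonzero_eq_iff[OF nz(1,2)] nonzero_eq_iff[OF nz(1,3)] nonzero_eq_iff[OF nz(2,3)]
      by (auto simp: is_node_2_iff)
  qed
  have "(\<Sum>j\<in>{1..<k}. of_bool (is_node 2 D [int j, int k - int j])) =
        (\<Sum>j\<in>{1..<k}. (of_bool (b j = c (j - 1) \<and> c j = c (j - 1)) :: int))"
    by (rule sum.cong) (simp_all add: node_j)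
  then show ?thesis
    using node_0 node_k
    by (simp add: diag_nodes_def sum_atMost_split_ends[OF assms(1)] nodes_before_def)
qed

lemma diag_changes_step:
  assumes "1 \<le> k" "k < d"
  shows "diag_changes k \<le> 2 * diag_nodes k + diag_changes (k - 1)"
  using sign_changes_bound[OF assms(1), of "diag_sign k" "diag_sign (k - 1)"]
  by (simp add: diag_nodes_inner[OF assms] diag_changes_def)

text \<open>Summing the step inequality over the diagonals \<open>1, \<dots>, m - 1\<close>; diagonal \<open>0\<close> has
  no sign changes.\<close>
lemma diag_changes_telescope:
  assumes "1 \<le> m" "m \<le> d"
  shows "diag_changes (m - 1) \<le> 2 * (\<Sum>k\<in>{1..<m}. diag_nodes k)"
  using assms
proof (induction m rule: nat_induct_at_least)
  case base
  then show ?case by (simp add: diag_changes_def changes_def)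
next
  case (Suc m)
  then show ?case using diag_changes_step[of m] by simp
qed

text \<open>On the diagonal \<open>x + y = d\<close> just outside the support both end points are nodes,
  and an interior point is a node iff diagonal \<open>d - 1\<close> does not change sign below it.\<close>
lemma diag_nodes_last: "diag_nodes d = int d + 1 - diag_changes (d - 1)"
proof -
  let ?c = "diag_sign (d - 1)"
  have node_j: "is_node 2 D [int (Suc i), int d - int (Suc i)] \<longleftrightarrow> ?c i = ?c (Suc i)"
    if "i < d - 1" for i
  proof -
    let ?v = "D [int i, int d - 1 - int i]" and ?w = "D [int i + 1, int d - 2 - int i]"
    have nz: "?v \<noteq> Z" "?w \<noteq> Z" using that by (auto simp: nonzero_iff)
    have "?c i \<longleftrightarrow> ?v = P" "?c (Suc i) \<longleftrightarrow> ?w = P"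
      using that by (simp_all add: diag_sign_def of_nat_diff algebra_simps)
    then show ?thesis
      using nz nonzero_eq_iff[OF nz] by (auto simp: is_node_2_iff nonzero_iff algebra_simps)
  qed
  have "(\<Sum>j\<in>{1..<d}. of_bool (is_node 2 D [int j, int d - int j])) =
        (\<Sum>i<d - 1. of_bool (is_node 2 D [int (Suc i), int d - int (Suc i)]))"
    using sum.shift_bounds_Suc_ivl[of "\<lambda>j. of_bool (is_node 2 D [int j, int d - int j])" 0 "d - 1"]
      d_pos by (simp add: lessThan_atLeast0)
  also have "\<dots> = (\<Sum>i<d - 1. (of_bool (?c i = ?c (Suc i)) :: int))"
    by (rule sum.cong[OF refl]) (simp only: lessThan_iff node_j)
  also have "\<dots> = int d - 1 - diag_changes (d - 1)"
    using d_pos by (simp add: non_changes diag_changes_def of_nat_diff)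
  finally have interior:
    "(\<Sum>j\<in>{1..<d}. of_bool (is_node 2 D [int j, int d - int j])) = int d - 1 - diag_changes (d - 1)" .
  have ends: "is_node 2 D [0, int d - 0]" "is_node 2 D [int d, int d - int d]"
    using d_pos by (simp_all add: is_node_2_iff nonzero_iff)
  show ?thesis
    unfolding diag_nodes_def sum_atMost_split_ends[OF d_pos] interior using ends by simp
qed

end


theorem mainTheorem7:
  fixes D :: "int list \<Rightarrow> sgn" and d :: nat
  assumes "newton_diagram 2 D"
    and "d \<ge> 1"
    and "supp D = {[a, b] | a b. a \<ge> 0 \<and> b \<ge> 0 \<and> a + b < int d}"
  shows "2 * num_nodes 2 D \<ge> d + 5"
proof -
  interpret triangle_diagram D d using assms(2,3) by unfold_locales
  have fin: "finite (supp D)" using assms(1) by (simp add: newton_diagram_def)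
  let ?A = "diag_changes (d - 1)"
  have "(\<Sum>k\<le>d. diag_nodes k) = diag_nodes 0 + (\<Sum>k\<in>{1..<d}. diag_nodes k) + diag_nodes d"
    using sum_atMost_split_ends[OF assms(2)] .
  then have "2 * (\<Sum>k\<le>d. diag_nodes k) \<ge> 2 + ?A + 2 * (int d + 1 - ?A)"
    using diag_nodes_0 diag_changes_telescope[OF assms(2) order_refl] diag_nodes_last by simp
  moreover have "?A \<le> int d - 1"
    using changes_le[of "diag_sign (d - 1)" "d - 1"] assms(2) by (simp add: diag_changes_def)
  moreover have "(\<Sum>k\<le>d. diag_nodes k) \<le> int (num_nodes 2 D)"
    using diag_nodes_le_num_nodes[OF fin] .
  ultimately have "int d + 5 \<le> 2 * int (num_nodes 2 D)"
    by (simp add: algebra_simps)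
  then show ?thesis by linarith
qed

end
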